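(* Let $Y:(0,\infty)\times(0,\infty)\times[0,1]\to(0,\infty)$, $(K,L,\lambda)\mapsto Y(K,L,\lambda)$, be a smooth (in particular twice continuously differentiable) function, viewed as a family of production functions indexed by the labor share $\lambda$, with constant returns to scale: $Y(cK,cL,\lambda)=c\,Y(K,L,\lambda)$ for all $c>0$, $K,L>0$, $\lambda\in[0,1]$. Define the wage $w(K,L,\lambda)=\lambda\,Y(K,L,\lambda)/L$, and let $k=K/L$ denote the capital-to-labor ratio. Call a wage-maximizing labor share any $\lambda^*\in[0,1]$ maximizing $\lambda\mapsto w(K,L,\lambda)$ over $[0,1]$, and call $w(K,L,\lambda^* )$ the maximum wage. Then: (a) The wage-maximizing labor share(s) and the maximum wage depend on $(K,L)$ only through the capital-to-labor ratio $k=K/L$. (b) Fix $(K,L)$. Suppose there exists at least one $\lambda\in(0,1)$ satisfying the first-order condition $\lambda=-1\big/\left(\partial \ln Y/\partial\lambda\right)$, where the derivative is evaluated at $(K,L,\lambda)$. If at every $\lambda\in(0,1)$ satisfying this first-order condition the second-order condition $\partial^2\ln Y/\partial\lambda^2<0$ holds, then the wage-maximizing labor share is unique and lies strictly between $0$ and $1$.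
   Context: Here $K$ is capital, $L$ labor, $Y$ output, and $\lambda$ the labor share of output; under constant returns to scale the wage is $w=\lambda\,(Y/L)$. The derivatives $\partial\ln Y/\partial\lambda$ and $\partial^2\ln Y/\partial\lambda^2$ are partial derivatives of $\ln Y(K,L,\lambda)$ with respect to $\lambda$ with $K,L$ held fixed. *)

theory Defs
  imports "HOL-Analysis.Analysis"
begin

text \<open>Twice continuously (Frechet) differentiable on a set S (derivatives taken within S,
  so that boundary points of the closed lambda-interval are covered).\<close>
definition C2_on :: "('a::real_normed_vector \<Rightarrow> real) \<Rightarrow> 'a set \<Rightarrow> bool" where
  "C2_on f S \<longleftrightarrow>
     (\<exists>(f' :: 'a \<Rightarrow> ('a \<Rightarrow>\<^sub>L real)) (f'' :: 'a \<Rightarrow> ('a \<Rightarrow>\<^sub>L ('a \<Rightarrow>\<^sub>L real))).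
        (\<forall>x\<in>S. (f has_derivative blinfun_apply (f' x)) (at x within S)
               \<and> (f' has_derivative blinfun_apply (f'' x)) (at x within S))
        \<and> continuous_on S f'')"

definition prod_domain :: "(real \<times> real \<times> real) set" where
  "prod_domain = {0<..} \<times> {0<..} \<times> {0..1}"

definition wage :: "(real \<Rightarrow> real \<Rightarrow> real \<Rightarrow> real) \<Rightarrow> real \<Rightarrow> real \<Rightarrow> real \<Rightarrow> real" where
  "wage Y K L l = l * Y K L l / L"

definition wage_maximizing :: "(real \<Rightarrow> real \<Rightarrow> real \<Rightarrow> real) \<Rightarrow> real \<Rightarrow> real \<Rightarrow> real \<Rightarrow> bool" where
  "wage_maximizing Y K L l \<longleftrightarrow>
     l \<in> {0..1} \<and> (\<forall>m\<in>{0..1}. wage Y K L m \<le> wage Y K L l)"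

end

theory Submission
  imports Defs
begin

text \<open>Under constant returns to scale the wage is homogeneous of degree zero in \<open>(K, L)\<close>,
  which gives (a). For (b) fix \<open>(K, L)\<close> and write \<open>h = Y K L\<close>. On \<open>(0, 1)\<close> the log-wage
  \<open>ln m + ln (h m)\<close> has derivative \<open>\<phi> m = 1 / m + (ln h)' m\<close>; its zeros are exactly the
  solutions of the first-order condition, and there \<open>\<phi>' m = - 1 / m\<^sup>2 + (ln h)'' m < 0\<close> by the
  second-order condition. A continuous function that crosses zero only downwards has at most
  one zero \<open>c\<close>, positive before and negative after it. Since \<open>(m h m)' = m h m \<phi> m\<close>, the wage
  strictly increases on \<open>[0, c]\<close> and strictly decreases on \<open>[c, 1]\<close>.\<close>

lemma neg_right_of_downcrossing:
  fixes \<phi> :: "real \<Rightarrow> real"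
  assumes "(\<phi> has_real_derivative D) (at z)" "D < 0" "\<phi> z = 0" "z < q"
  shows "\<exists>y\<in>{z<..<q}. \<phi> y < 0"
proof -
  obtain d where "d > 0" and d: "\<forall>h>0. h < d \<longrightarrow> \<phi> (z + h) < \<phi> z"
    using DERIV_neg_dec_right[OF assms(1,2)] by blast
  obtain e where "0 < e" "e < d" "e < q - z"
    using field_lbound_gt_zero[OF \<open>d > 0\<close>, of "q - z"] \<open>z < q\<close> by auto
  then show ?thesis using d assms(3) by (intro bexI[of _ "z + e"]) auto
qed

lemma pos_left_of_downcrossing:
  fixes \<phi> :: "real \<Rightarrow> real"
  assumes "(\<phi> has_real_derivative D) (at z)" "D < 0" "\<phi> z = 0" "q < z"
  shows "\<exists>y\<in>{q<..<z}. \<phi> y > 0"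
proof -
  obtain d where "d > 0" and d: "\<forall>h>0. h < d \<longrightarrow> \<phi> z < \<phi> (z - h)"
    using DERIV_neg_dec_left[OF assms(1,2)] by blast
  obtain e where "0 < e" "e < d" "e < z - q"
    using field_lbound_gt_zero[OF \<open>d > 0\<close>, of "z - q"] \<open>q < z\<close> by auto
  then show ?thesis using d assms(3) by (intro bexI[of _ "z - e"]) auto
qed

lemma neg_after_downcrossing:
  fixes \<phi> :: "real \<Rightarrow> real"
  assumes cont: "continuous_on {a<..<b} \<phi>"
    and down: "\<And>z. z \<in> {a<..<b} \<Longrightarrow> \<phi> z = 0 \<Longrightarrow> \<exists>D<0. (\<phi> has_real_derivative D) (at z)"
    and c: "c \<in> {a<..<b}" "\<phi> c = 0"
    and x: "x \<in> {c<..<b}"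
  shows "\<phi> x < 0"
proof (rule ccontr)
  assume "\<not> \<phi> x < 0"
  \<comment> \<open>Then the first zero \<open>s\<close> of \<open>\<phi>\<close> beyond a point \<open>p\<close> with \<open>\<phi> p < 0\<close> would be an upward crossing.\<close>
  obtain p where p: "c < p" "p < x" "\<phi> p < 0"
    using down[OF c] neg_right_of_downcrossing c x by fastforce
  have cont_px: "continuous_on {p..x} \<phi>"
    using cont by (rule continuous_on_subset) (use p c x in auto)
  let ?Z = "{y\<in>{p..x}. \<phi> y = 0}"
  have "?Z \<noteq> {}"
    using IVT'[of \<phi> p 0 x] cont_px p \<open>\<not> \<phi> x < 0\<close> by force
  moreover have bdd: "bdd_below ?Z"
    by (auto intro: bdd_belowI[of _ p])
  moreover have "closed ?Z"
    by (rule continuous_closed_preimage_constant) (use cont_px in auto)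
  ultimately have "Inf ?Z \<in> ?Z"
    by (rule closed_contains_Inf)
  define s where "s = Inf ?Z"
  have s: "s \<in> {p<..x}" "\<phi> s = 0"
    using \<open>Inf ?Z \<in> ?Z\<close> p(3) unfolding s_def by (auto simp: less_eq_real_def)
  have s_least: "s \<le> t" if "t \<in> {p..x}" "\<phi> t = 0" for t
    unfolding s_def using bdd that by (auto intro: cInf_lower)
  obtain y where y: "p < y" "y < s" "\<phi> y > 0"
    using down[of s] pos_left_of_downcrossing[of \<phi> _ s p] s p c x by fastforce
  obtain t where "p \<le> t" "t \<le> y" "\<phi> t = 0"
    using IVT'[of \<phi> p 0 y] continuous_on_subset[OF cont_px, of "{p..y}"] p y s by force
  with s_least[of t] y s show False by auto
qed

lemma pos_before_downcrossing:
  fixes \<phi> :: "real \<Rightarrow> real"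
  assumes cont: "continuous_on {a<..<b} \<phi>"
    and down: "\<And>z. z \<in> {a<..<b} \<Longrightarrow> \<phi> z = 0 \<Longrightarrow> \<exists>D<0. (\<phi> has_real_derivative D) (at z)"
    and c: "c \<in> {a<..<b}" "\<phi> c = 0"
    and x: "x \<in> {a<..<c}"
  shows "\<phi> x > 0"
proof -
  \<comment> \<open>The reflection \<open>\<psi>\<close> of \<open>\<phi>\<close> again crosses zero only downwards.\<close>
  define \<psi> where "\<psi> t = - \<phi> (- t)" for t
  have "continuous_on {-b<..<-a} \<psi>"
    unfolding \<psi>_def
    by (intro continuous_intros continuous_on_compose2[OF cont]) auto
  moreover have "\<exists>D<0. (\<psi> has_real_derivative D) (at z)"
    if "z \<in> {-b<..<-a}" "\<psi> z = 0" for z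
  proof -
    have "- z \<in> {a<..<b}" "\<phi> (- z) = 0"
      using that by (auto simp: \<psi>_def)
    then obtain D where "D < 0" "(\<phi> has_real_derivative D) (at (- z))"
      using down by blast
    then have "(\<psi> has_real_derivative D) (at z)"
      unfolding \<psi>_def using DERIV_minus DERIV_mirror by fastforce
    with \<open>D < 0\<close> show ?thesis by blast
  qed
  ultimately have "\<psi> (- x) < 0"
    by (rule neg_after_downcrossing[of "-b" "-a" \<psi> "- c"]) (use c x in \<open>auto simp: \<psi>_def\<close>)
  then show ?thesis by (simp add: \<psi>_def)
qed

lemma strict_max_at_derivative_sign_change:
  fixes f f' :: "real \<Rightarrow> real"
  assumes cont: "continuous_on {a..b} f"
    and deriv: "\<And>x. x \<in> {a<..<b} \<Longrightarrow> (f has_real_derivative f' x) (at x)"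
    and inc: "\<And>x. x \<in> {a<..<c} \<Longrightarrow> f' x > 0"
    and dec: "\<And>x. x \<in> {c<..<b} \<Longrightarrow> f' x < 0"
    and c: "c \<in> {a..b}" and m: "m \<in> {a..b}" "m \<noteq> c"
  shows "f m < f c"
proof (cases "m < c")
  case True
  show ?thesis
  proof (rule DERIV_pos_imp_increasing_open[OF True])
    show "continuous_on {m..c} f" using cont by (rule continuous_on_subset) (use c m in auto)
  qed (use deriv inc c m in force)
next
  case False
  then have "c < m" using m by simp
  then show ?thesis
  proof (rule DERIV_neg_imp_decreasing_open)
    show "continuous_on {c..m} f" using cont by (rule continuous_on_subset) (use c m in auto)
  qed (use deriv dec c m in force)
qed

lemma has_vector_derivative_last_slice:
  fixes F :: "real \<times> real \<times> real \<Rightarrow> 'b::real_normed_vector"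
  assumes F': "(F has_derivative F') (at (a, b, t))"
  shows "((\<lambda>s. F (a, b, s)) has_vector_derivative F' (0, 0, 1)) (at t)"
proof -
  have "((\<lambda>s. (a, b, s)) has_derivative (\<lambda>s. (0, 0, s))) (at t)"
    by (auto intro!: derivative_eq_intros)
  from has_derivative_compose[OF this F']
  have slice: "((\<lambda>s. F (a, b, s)) has_derivative (\<lambda>s. F' (0, 0, s))) (at t)" .
  have "F' (0, 0, s) = s *\<^sub>R F' (0, 0, 1)" for s
  proof -
    have "F' (s *\<^sub>R (0, 0, 1)) = s *\<^sub>R F' (0, 0, 1)"
      by (rule linear_cmul[OF has_derivative_linear[OF F']])
    then show ?thesis by simp
  qed
  then have "(\<lambda>s. F' (0, 0, s)) = (\<lambda>s. s *\<^sub>R F' (0, 0, 1))" ..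
  with slice show ?thesis
    unfolding has_vector_derivative_def by (simp only:)
qed

lemma C2_on_prod_domain_slice:
  fixes Y :: "real \<Rightarrow> real \<Rightarrow> real \<Rightarrow> real"
  assumes smooth: "C2_on (\<lambda>(K, L, l). Y K L l) prod_domain" and "K > 0" "L > 0"
  shows "continuous_on {0..1} (Y K L)"
    and "\<And>m. m \<in> {0<..<1} \<Longrightarrow> Y K L differentiable (at m)"
    and "\<And>m. m \<in> {0<..<1} \<Longrightarrow> deriv (Y K L) differentiable (at m)"
proof -
  define F where "F = (\<lambda>(K, L, l). Y K L l)"
  obtain f' :: "real \<times> real \<times> real \<Rightarrow> (real \<times> real \<times> real) \<Rightarrow>\<^sub>L real"
    and f'' :: "real \<times> real \<times> real \<Rightarrow> (real \<times> real \<times> real) \<Rightarrow>\<^sub>L ((real \<times> real \<times> real) \<Rightarrow>\<^sub>L real)"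
    where d1: "\<And>x. x \<in> prod_domain \<Longrightarrow> (F has_derivative f' x) (at x within prod_domain)"
      and d2: "\<And>x. x \<in> prod_domain \<Longrightarrow> (f' has_derivative f'' x) (at x within prod_domain)"
    using smooth unfolding C2_on_def F_def by blast
  have "continuous_on prod_domain F"
    using d1 has_derivative_continuous continuous_on_eq_continuous_within by blast
  then have "continuous_on {0..1} (\<lambda>m. F (K, L, m))"
    by (rule continuous_on_compose2)
      (use \<open>K > 0\<close> \<open>L > 0\<close> in \<open>auto intro!: continuous_intros simp: prod_domain_def\<close>)
  then show "continuous_on {0..1} (Y K L)"
    by (simp add: F_def)
  have at_interior: "at (K, L, m) within prod_domain = at (K, L, m)" if "m \<in> {0<..<1}" for m
    by (rule at_within_open_subset[of _ "{0<..} \<times> {0<..} \<times> {0<..<1}"])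
      (use that \<open>K > 0\<close> \<open>L > 0\<close> in \<open>auto intro!: open_Times simp: prod_domain_def\<close>)
  have in_domain: "(K, L, m) \<in> prod_domain" if "m \<in> {0<..<1}" for m
    using that \<open>K > 0\<close> \<open>L > 0\<close> by (simp add: prod_domain_def)
  define D where "D m = f' (K, L, m) (0, 0, 1)" for m
  have Y_deriv: "(Y K L has_real_derivative D m) (at m)" if "m \<in> {0<..<1}" for m
    using has_vector_derivative_last_slice[OF d1[OF in_domain[OF that], unfolded at_interior[OF that]]]
    by (simp add: D_def F_def has_real_derivative_iff_has_vector_derivative)
  then show "Y K L differentiable (at m)" if "m \<in> {0<..<1}" for m
    using that real_differentiable_def by blast
  show "deriv (Y K L) differentiable (at m)" if m: "m \<in> {0<..<1}" for m
  proof -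
    have "(\<lambda>s. f' (K, L, s)) differentiable (at m)"
      using has_vector_derivative_last_slice[OF d2[OF in_domain[OF m], unfolded at_interior[OF m]]]
      by (auto simp: differentiable_def has_vector_derivative_def)
    then have "D differentiable (at m)"
      unfolding D_def
      by (rule differentiable_compose[where f = "\<lambda>A. blinfun_apply A (0, 0, 1)",
            OF bounded_linear_imp_differentiable[OF blinfun.bounded_linear_left]])
    then obtain D' where "(D has_real_derivative D') (at m)"
      using real_differentiable_def by blast
    then have "(deriv (Y K L) has_real_derivative D') (at m)"
      by (rule has_field_derivative_transform_within_open[of _ _ _ "{0<..<1}"])
        (use m in \<open>auto simp: Y_deriv[THEN DERIV_imp_deriv]\<close>)
    then show ?thesis
      using real_differentiable_def by blast
  qed
qed

lemma deriv_ln_comp: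
  fixes h :: "real \<Rightarrow> real"
  assumes "h differentiable (at m)" "h m > 0"
  shows "deriv (\<lambda>x. ln (h x)) m = deriv h m / h m"
proof (rule DERIV_imp_deriv)
  have "(h has_real_derivative deriv h m) (at m)"
    using assms(1) by (simp add: DERIV_deriv_iff_real_differentiable)
  from DERIV_chain2[OF DERIV_ln_divide[OF assms(2)] this]
  show "((\<lambda>x. ln (h x)) has_real_derivative deriv h m / h m) (at m)"
    by simp
qed

lemma first_order_condition_sign_change:
  fixes G :: "real \<Rightarrow> real"
  assumes diff: "\<And>m. m \<in> {0<..<1} \<Longrightarrow> G differentiable (at m)"
    and foc: "\<exists>l\<in>{0<..<1}. l = - 1 / G l"
    and soc: "\<forall>l\<in>{0<..<1}. l = - 1 / G l \<longrightarrow> deriv G l < 0"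
  shows "\<exists>c\<in>{0<..<1}. (\<forall>x\<in>{0<..<c}. 1 / x + G x > 0) \<and> (\<forall>x\<in>{c<..<1}. 1 / x + G x < 0)"
proof -
  define \<phi> where "\<phi> m = 1 / m + G m" for m
  have \<phi>': "(\<phi> has_real_derivative - 1 / m\<^sup>2 + deriv G m) (at m)" if "m \<in> {0<..<1}" for m
  proof -
    have "(inverse has_real_derivative - (inverse m * inverse m)) (at m)"
      using DERIV_inverse[of m UNIV] that by (simp add: power2_eq_square)
    moreover have "(G has_real_derivative deriv G m) (at m)"
      using diff[OF that] by (simp add: DERIV_deriv_iff_real_differentiable)
    ultimately show ?thesis
      unfolding \<phi>_def using DERIV_add by (fastforce simp: divide_inverse power2_eq_square)
  qed
  have foc_iff: "\<phi> m = 0 \<longleftrightarrow> m = - 1 / G m" if "m \<in> {0<..<1}" for m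
  proof -
    have "\<phi> m = 0 \<longleftrightarrow> G m = - 1 / m"
      using that by (auto simp: \<phi>_def eq_neg_iff_add_eq_0 add.commute)
    also have "\<dots> \<longleftrightarrow> m = - 1 / G m"
    proof
      assume "m = - 1 / G m"
      then have "- 1 / m = - 1 / (- 1 / G m)"
        by (rule arg_cong)
      then show "G m = - 1 / m"
        by simp
    qed simp
    finally show ?thesis .
  qed
  \<comment> \<open>Equations of the form \<open>z = - 1 / G z\<close> make \<open>blast\<close> and \<open>simp\<close> loop, hence the explicit steps.\<close>
  from foc obtain c where c: "c \<in> {0<..<1}" and "c = - 1 / G c" ..
  then have "\<phi> c = 0"
    by (subst foc_iff)
  have down: "\<exists>D<0. (\<phi> has_real_derivative D) (at z)" if z: "z \<in> {0<..<1}" "\<phi> z = 0" for z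
  proof -
    from soc z(1) have "z = - 1 / G z \<longrightarrow> deriv G z < 0"
      by (rule bspec)
    moreover have "z = - 1 / G z"
      using z(2) by (subst (asm) foc_iff[OF z(1)])
    ultimately have "deriv G z < 0"
      by (rule mp)
    moreover have "- 1 / z\<^sup>2 < 0"
      using z(1) by simp
    ultimately have "- 1 / z\<^sup>2 + deriv G z < 0"
      by linarith
    with \<phi>'[OF z(1)] show ?thesis
      by blast
  qed
  have cont: "continuous_on {0<..<1} \<phi>"
    using \<phi>' DERIV_isCont continuous_at_imp_continuous_on by blast
  show ?thesis
    using c pos_before_downcrossing[OF cont down c \<open>\<phi> c = 0\<close>]
      neg_after_downcrossing[OF cont down c \<open>\<phi> c = 0\<close>]
    unfolding \<phi>_def by blast
qed

lemma strict_argmax_times_in_open_unit: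
  fixes h :: "real \<Rightarrow> real"
  defines "G \<equiv> deriv (\<lambda>m. ln (h m))"
  assumes cont: "continuous_on {0..1} h"
    and pos: "\<And>m. m \<in> {0..1} \<Longrightarrow> h m > 0"
    and diff: "\<And>m. m \<in> {0<..<1} \<Longrightarrow> h differentiable (at m)"
    and diff2: "\<And>m. m \<in> {0<..<1} \<Longrightarrow> deriv h differentiable (at m)"
    and foc: "\<exists>l\<in>{0<..<1}. l = - 1 / G l"
    and soc: "\<forall>l\<in>{0<..<1}. l = - 1 / G l \<longrightarrow> deriv G l < 0"
  shows "\<exists>c\<in>{0<..<1}. \<forall>m\<in>{0..1}. m \<noteq> c \<longrightarrow> m * h m < c * h c"
proof -
  have h': "(h has_real_derivative deriv h m) (at m)" if "m \<in> {0<..<1}" for m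
    using diff[OF that] by (simp add: DERIV_deriv_iff_real_differentiable)
  have h'': "(deriv h has_real_derivative deriv (deriv h) m) (at m)" if "m \<in> {0<..<1}" for m
    using diff2[OF that] by (simp add: DERIV_deriv_iff_real_differentiable)
  have G_eq: "G m = deriv h m / h m" if "m \<in> {0<..<1}" for m
    unfolding G_def using that by (intro deriv_ln_comp diff pos) auto
  have "G differentiable (at m)" if m: "m \<in> {0<..<1}" for m
  proof -
    have "((\<lambda>x. deriv h x / h x) has_real_derivative
        (deriv (deriv h) m * h m - deriv h m * deriv h m) / (h m * h m)) (at m)"
      by (rule DERIV_divide[OF h''[OF m] h'[OF m]]) (use pos[of m] m in auto)
    then have "(G has_real_derivative
        (deriv (deriv h) m * h m - deriv h m * deriv h m) / (h m * h m)) (at m)"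
      by (rule has_field_derivative_transform_within_open[of _ _ _ "{0<..<1}"]) (use m G_eq in auto)
    then show ?thesis
      using real_differentiable_def by blast
  qed
  from first_order_condition_sign_change[OF this foc soc]
  obtain c where c: "c \<in> {0<..<1}"
    and inc: "\<forall>x\<in>{0<..<c}. 1 / x + G x > 0" and dec: "\<forall>x\<in>{c<..<1}. 1 / x + G x < 0"
    by blast
  have f': "((\<lambda>m. m * h m) has_real_derivative m * h m * (1 / m + G m)) (at m)"
    if m: "m \<in> {0<..<1}" for m
  proof -
    have "m * deriv h m + 1 * h m = m * h m * (1 / m + G m)"
      using m pos[of m] by (simp add: G_eq distrib_left)
    with DERIV_mult'[OF DERIV_ident h'[OF m]] show ?thesis
      by (rule DERIV_cong)
  qed
  have "m * h m < c * h c" if "m \<in> {0..1}" "m \<noteq> c" for m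
  proof (rule strict_max_at_derivative_sign_change[OF _ f'])
    show "continuous_on {0..1} (\<lambda>m. m * h m)"
      by (intro continuous_intros cont)
    show "x * h x * (1 / x + G x) > 0" if "x \<in> {0<..<c}" for x
      using that c pos[of x] inc that by simp
    show "x * h x * (1 / x + G x) < 0" if "x \<in> {c<..<1}" for x
      using that c pos[of x] dec that by (simp add: mult_pos_neg)
  qed (use c that in auto)
  with c show ?thesis by blast
qed

lemma wage_homogeneous:
  assumes "Y (c * K) (c * L) l = c * Y K L l" "c \<noteq> 0"
  shows "wage Y (c * K) (c * L) l = wage Y K L l"
  using assms by (simp add: wage_def)

lemma wage_eq_if_same_ratio:
  assumes crs: "\<And>c. c > 0 \<Longrightarrow> Y (c * K) (c * L) l = c * Y K L l"
    and "L > 0" "L' > 0" "K / L = K' / L'"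
  shows "wage Y K' L' l = wage Y K L l"
proof -
  define c where "c = L' / L"
  have "c > 0" "L' = c * L"
    using \<open>L > 0\<close> \<open>L' > 0\<close> by (simp_all add: c_def)
  moreover have "K' = c * K"
    using \<open>K / L = K' / L'\<close> \<open>L > 0\<close> \<open>L' > 0\<close> by (simp add: c_def field_simps)
  ultimately show ?thesis
    using wage_homogeneous[where Y = Y, OF crs] by simp
qed

lemma wage_maximizing_cong:
  assumes "\<And>l. l \<in> {0..1} \<Longrightarrow> wage Y' K' L' l = wage Y K L l"
  shows "wage_maximizing Y' K' L' l \<longleftrightarrow> wage_maximizing Y K L l"
  using assms by (auto simp: wage_maximizing_def)

lemma wage_maximizing_same_wage:
  assumes "wage_maximizing Y K L l" "wage_maximizing Y K L l'"
  shows "wage Y K L l = wage Y K L l'"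
  using assms by (force simp: wage_maximizing_def intro: order.antisym)

lemma wage_maximizing_iff_strict_argmax:
  assumes "c \<in> {0..1}" "\<And>m. m \<in> {0..1} \<Longrightarrow> m \<noteq> c \<Longrightarrow> wage Y K L m < wage Y K L c"
  shows "wage_maximizing Y K L m \<longleftrightarrow> m = c"
  using assms by (force simp: wage_maximizing_def less_le_not_le)

theorem theorem1:
  fixes Y :: "real \<Rightarrow> real \<Rightarrow> real \<Rightarrow> real"
  assumes smooth: "C2_on (\<lambda>(K, L, l). Y K L l) prod_domain"
    and pos: "\<And>K L l. K > 0 \<Longrightarrow> L > 0 \<Longrightarrow> l \<in> {0..1} \<Longrightarrow> Y K L l > 0"
    and crs: "\<And>c K L l. c > 0 \<Longrightarrow> K > 0 \<Longrightarrow> L > 0 \<Longrightarrow> l \<in> {0..1} \<Longrightarrow>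
                 Y (c * K) (c * L) l = c * Y K L l"
  shows
    "(\<forall>K L K' L'. K > 0 \<longrightarrow> L > 0 \<longrightarrow> K' > 0 \<longrightarrow> L' > 0 \<longrightarrow> K / L = K' / L' \<longrightarrow>
        {l. wage_maximizing Y K L l} = {l. wage_maximizing Y K' L' l}
        \<and> (\<forall>l l'. wage_maximizing Y K L l \<longrightarrow> wage_maximizing Y K' L' l' \<longrightarrow>
                 wage Y K L l = wage Y K' L' l'))
     \<and>
     (\<forall>K L. K > 0 \<longrightarrow> L > 0 \<longrightarrow>
        (\<exists>l\<in>{0<..<1}. l = - 1 / deriv (\<lambda>m. ln (Y K L m)) l) \<longrightarrow>
        (\<forall>l\<in>{0<..<1}. l = - 1 / deriv (\<lambda>m. ln (Y K L m)) l \<longrightarrow>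
             deriv (deriv (\<lambda>m. ln (Y K L m))) l < 0) \<longrightarrow>
        (\<exists>l\<in>{0<..<1}. wage_maximizing Y K L l \<and>
             (\<forall>m. wage_maximizing Y K L m \<longrightarrow> m = l)))"
proof (intro conjI allI impI)
  fix K L K' L' :: real
  assume "K > 0" "L > 0" "K' > 0" "L' > 0" "K / L = K' / L'"
  have same_wage: "wage Y K' L' l = wage Y K L l" if "l \<in> {0..1}" for l
    using \<open>L > 0\<close> \<open>L' > 0\<close> \<open>K / L = K' / L'\<close>
    by (intro wage_eq_if_same_ratio crs \<open>K > 0\<close> that)
  then have same_maximizers: "wage_maximizing Y K' L' l \<longleftrightarrow> wage_maximizing Y K L l" for l
    by (rule wage_maximizing_cong)
  then show "{l. wage_maximizing Y K L l} = {l. wage_maximizing Y K' L' l}"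
    by blast
  fix l l'
  assume "wage_maximizing Y K L l" and l': "wage_maximizing Y K' L' l'"
  then have "wage Y K L l = wage Y K L l'"
    using same_maximizers wage_maximizing_same_wage by blast
  also have "\<dots> = wage Y K' L' l'"
    using l' same_wage by (simp add: wage_maximizing_def)
  finally show "wage Y K L l = wage Y K' L' l'" .
next
  fix K L :: real
  assume "K > 0" "L > 0"
    and foc: "\<exists>l\<in>{0<..<1}. l = - 1 / deriv (\<lambda>m. ln (Y K L m)) l"
    and soc: "\<forall>l\<in>{0<..<1}. l = - 1 / deriv (\<lambda>m. ln (Y K L m)) l \<longrightarrow>
                deriv (deriv (\<lambda>m. ln (Y K L m))) l < 0"
  note slice = C2_on_prod_domain_slice[OF smooth \<open>K > 0\<close> \<open>L > 0\<close>]
  have "Y K L m > 0" if "m \<in> {0..1}" for m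
    using pos \<open>K > 0\<close> \<open>L > 0\<close> that .
  from strict_argmax_times_in_open_unit[OF slice(1) this slice(2,3) foc soc]
  obtain c where c: "c \<in> {0<..<1}" and argmax: "\<forall>m\<in>{0..1}. m \<noteq> c \<longrightarrow> m * Y K L m < c * Y K L c"
    by blast
  have "wage_maximizing Y K L m \<longleftrightarrow> m = c" for m
  proof (rule wage_maximizing_iff_strict_argmax)
    show "wage Y K L m < wage Y K L c" if "m \<in> {0..1}" "m \<noteq> c" for m
      using argmax that \<open>L > 0\<close> by (simp add: wage_def divide_strict_right_mono)
  qed (use c in simp)
  with c show "\<exists>l\<in>{0<..<1}. wage_maximizing Y K L l \<and> (\<forall>m. wage_maximizing Y K L m \<longrightarrow> m = l)"
    by blast
qed

end
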